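(* For any $0\leq p_0\leq p_1\leq 1$ and $\alpha\in[0,1]$, \[ h_2(\alpha p_0+(1-\alpha)p_1)-\alpha h_2(p_0)-(1-\alpha)h_2(p_1)\leq \min\left\{p_1-p_0,\ \frac{(p_1-p_0)^2}{2\min\{p_0,1-p_1\}}\right\}. \]
   Context: $h_2(p)=-p\log p-(1-p)\log(1-p)$ is the binary entropy function with natural logarithm. *)

theory Defs
  imports Complex_Main
begin

definition xlnx :: "real \<Rightarrow> real" where
  "xlnx x = (if x = 0 then 0 else x * ln x)"

definition h2 :: "real \<Rightarrow> real" where
  "h2 p = - xlnx p - xlnx (1 - p)"

end

theory Submission
  imports Defs
begin

text \<open>The entropy gap splits into two Jensen gaps of x ln x, one for p and one for 1 - p.
  Writing x ln x = x ln m + x ln (x / m) for the mixture point m and using ln t \<le> t - 1 bounds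
  such a gap by the chi-square term a (1 - a) (x1 - x0)^2 / m. The linear bound follows from
  m \<ge> (1 - a) (x1 - x0); the quadratic one from a (1 - a) \<le> 1/4 and m \<ge> min p0 (1 - p1).\<close>

definition xlnx_gap :: "real \<Rightarrow> real \<Rightarrow> real \<Rightarrow> real" where
  "xlnx_gap a x0 x1 = a * xlnx x0 + (1 - a) * xlnx x1 - xlnx (a * x0 + (1 - a) * x1)"

lemma xlnx_gap_swap: "xlnx_gap a x0 x1 = xlnx_gap (1 - a) x1 x0"
  by (simp add: xlnx_gap_def algebra_simps)

lemma h2_gap_eq_xlnx_gap:
  "h2 (a * p0 + (1 - a) * p1) - a * h2 p0 - (1 - a) * h2 p1
     = xlnx_gap a p0 p1 + xlnx_gap a (1 - p0) (1 - p1)"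
proof -
  have "1 - (a * p0 + (1 - a) * p1) = a * (1 - p0) + (1 - a) * (1 - p1)"
    by (simp add: algebra_simps)
  then show ?thesis
    by (simp add: h2_def xlnx_gap_def algebra_simps)
qed

lemma xlnx_minus_mult_ln_le:
  assumes "0 \<le> y" "0 < x"
  shows "xlnx y - y * ln x \<le> y * (y / x - 1)"
proof (cases "y = 0")
  case True
  then show ?thesis by (simp add: xlnx_def)
next
  case False
  with assms have "0 < y" by simp
  have "ln y - ln x = ln (y / x)"
    using \<open>0 < y\<close> assms by (simp add: ln_div)
  also have "\<dots> \<le> y / x - 1"
    using \<open>0 < y\<close> assms by (intro ln_le_minus_one) simp
  finally have "y * (ln y - ln x) \<le> y * (y / x - 1)"
    using \<open>0 < y\<close> by (intro mult_left_mono) auto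
  then show ?thesis
    using False by (simp add: xlnx_def algebra_simps)
qed

text \<open>No positivity of the mixture point is needed: if it is 0, both sides vanish (x / 0 = 0).\<close>

lemma xlnx_gap_le_chi_square:
  assumes "0 \<le> x0" "0 \<le> x1" "0 \<le> a" "a \<le> 1"
  shows "xlnx_gap a x0 x1 \<le> a * (1 - a) * (x1 - x0)^2 / (a * x0 + (1 - a) * x1)"
proof -
  define m where "m = a * x0 + (1 - a) * x1"
  have "0 \<le> a * x0" "0 \<le> (1 - a) * x1"
    using assms by simp_all
  consider "m = 0" | "0 < m"
    using \<open>0 \<le> a * x0\<close> \<open>0 \<le> (1 - a) * x1\<close> m_def by linarith
  then show ?thesis
  proof cases
    case 1
    then have "a * x0 = 0" "(1 - a) * x1 = 0"
      using \<open>0 \<le> a * x0\<close> \<open>0 \<le> (1 - a) * x1\<close> m_def by linarith+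
    then show ?thesis
      using 1 by (auto simp: xlnx_gap_def xlnx_def m_def)
  next
    case 2
    have "xlnx m = a * (x0 * ln m) + (1 - a) * (x1 * ln m)"
      using 2 by (simp add: xlnx_def m_def algebra_simps)
    moreover have "xlnx_gap a x0 x1 = a * xlnx x0 + (1 - a) * xlnx x1 - xlnx m"
      unfolding xlnx_gap_def m_def ..
    ultimately have "xlnx_gap a x0 x1 = a * (xlnx x0 - x0 * ln m) + (1 - a) * (xlnx x1 - x1 * ln m)"
      by (simp add: algebra_simps)
    also have "\<dots> \<le> a * (x0 * (x0 / m - 1)) + (1 - a) * (x1 * (x1 / m - 1))"
      using assms 2 by (intro add_mono mult_left_mono xlnx_minus_mult_ln_le) auto
    also have "\<dots> = (a * x0^2 + (1 - a) * x1^2) / m - (a * x0 + (1 - a) * x1)"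
      using 2 by (simp add: field_simps power2_eq_square)
    also have "\<dots> = (a * x0^2 + (1 - a) * x1^2) / m - m"
      by (simp add: m_def)
    also have "\<dots> = (a * x0^2 + (1 - a) * x1^2 - m^2) / m"
      using 2 by (simp add: field_simps power2_eq_square)
    also have "a * x0^2 + (1 - a) * x1^2 - m^2 = a * (1 - a) * (x1 - x0)^2"
      by (simp add: m_def algebra_simps power2_eq_square)
    finally show ?thesis
      unfolding m_def .
  qed
qed

lemma xlnx_gap_le_linear:
  assumes "0 \<le> x0" "x0 \<le> x1" "0 \<le> a" "a \<le> 1"
  shows "xlnx_gap a x0 x1 \<le> a * (x1 - x0)"
proof -
  define m where "m = a * x0 + (1 - a) * x1"
  have "(1 - a) * (x1 - x0) \<le> m"
    using assms by (simp add: m_def algebra_simps)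
  then have "a * ((1 - a) * (x1 - x0) * (x1 - x0)) \<le> a * (m * (x1 - x0))"
    using assms by (intro mult_left_mono mult_right_mono) auto
  then have "a * (1 - a) * (x1 - x0)^2 \<le> a * (x1 - x0) * m"
    by (simp add: power2_eq_square algebra_simps)
  moreover have "0 \<le> m"
    using assms by (simp add: m_def)
  ultimately have "a * (1 - a) * (x1 - x0)^2 / m \<le> a * (x1 - x0)"
    using assms by (cases "m = 0") (simp_all add: pos_divide_le_eq)
  then show ?thesis
    using xlnx_gap_le_chi_square[of x0 x1 a] assms m_def by simp
qed

lemma xlnx_gap_le_quadratic:
  assumes "0 \<le> x0" "0 \<le> x1" "0 \<le> a" "a \<le> 1"
    and "0 < c" "c \<le> a * x0 + (1 - a) * x1"
  shows "xlnx_gap a x0 x1 \<le> (x1 - x0)^2 / (4 * c)"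
proof -
  have "a * (1 - a) \<le> 1 / 4"
    using zero_le_square[of "a - 1 / 2"] by (simp add: algebra_simps power2_eq_square)
  from mult_right_mono[OF this zero_le_power2[of "x1 - x0"]]
  have "a * (1 - a) * (x1 - x0)^2 \<le> (x1 - x0)^2 / 4"
    by simp
  then have "a * (1 - a) * (x1 - x0)^2 / (a * x0 + (1 - a) * x1) \<le> (x1 - x0)^2 / 4 / c"
    using assms by (intro frac_le) auto
  then show ?thesis
    using xlnx_gap_le_chi_square[of x0 x1 a] assms by simp
qed

theorem lemma2:
  fixes p0 p1 \<alpha> :: real
  assumes "0 \<le> p0" "p0 \<le> p1" "p1 \<le> 1" "0 \<le> \<alpha>" "\<alpha> \<le> 1"
  shows "h2 (\<alpha> * p0 + (1 - \<alpha>) * p1) - \<alpha> * h2 p0 - (1 - \<alpha>) * h2 p1 \<le> p1 - p0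
     \<and> (min p0 (1 - p1) > 0 \<longrightarrow>
        h2 (\<alpha> * p0 + (1 - \<alpha>) * p1) - \<alpha> * h2 p0 - (1 - \<alpha>) * h2 p1
          \<le> (p1 - p0)^2 / (2 * min p0 (1 - p1)))"
proof (intro conjI impI)
  have "xlnx_gap \<alpha> p0 p1 \<le> \<alpha> * (p1 - p0)"
    using assms by (intro xlnx_gap_le_linear) auto
  moreover have "xlnx_gap \<alpha> (1 - p0) (1 - p1) \<le> (1 - \<alpha>) * (p1 - p0)"
    using xlnx_gap_le_linear[of "1 - p1" "1 - p0" "1 - \<alpha>"] assms
    by (simp add: xlnx_gap_swap[of \<alpha>])
  ultimately show "h2 (\<alpha> * p0 + (1 - \<alpha>) * p1) - \<alpha> * h2 p0 - (1 - \<alpha>) * h2 p1 \<le> p1 - p0"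
    unfolding h2_gap_eq_xlnx_gap by (simp add: algebra_simps)
next
  define c where "c = min p0 (1 - p1)"
  assume "0 < min p0 (1 - p1)"
  then have "0 < c" by (simp add: c_def)
  have "c \<le> \<alpha> * p0 + (1 - \<alpha>) * p1" "c \<le> \<alpha> * (1 - p0) + (1 - \<alpha>) * (1 - p1)"
    using assms mult_nonneg_nonneg[of "1 - \<alpha>" "p1 - p0"] mult_nonneg_nonneg[of \<alpha> "p1 - p0"]
    by (auto simp: c_def algebra_simps)
  then have "xlnx_gap \<alpha> p0 p1 \<le> (p1 - p0)^2 / (4 * c)"
    "xlnx_gap \<alpha> (1 - p0) (1 - p1) \<le> ((1 - p1) - (1 - p0))^2 / (4 * c)"
    using assms \<open>0 < c\<close> by (intro xlnx_gap_le_quadratic; simp)+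
  moreover have "((1 - p1) - (1 - p0))^2 = (p1 - p0)^2"
    by (simp add: power2_commute)
  ultimately show "h2 (\<alpha> * p0 + (1 - \<alpha>) * p1) - \<alpha> * h2 p0 - (1 - \<alpha>) * h2 p1
      \<le> (p1 - p0)^2 / (2 * min p0 (1 - p1))"
    unfolding h2_gap_eq_xlnx_gap c_def[symmetric] by (simp add: field_simps)
qed

end
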